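(* Let $M$ be a graded finitely generated faithful graded multiplication $R$-module and $U$ a proper graded submodule of $M$, and assume $J_{gr}(M)=J_{gr}(R)M$. Then $U$ is a graded weakly $J_{gr}$-semiprime submodule of $M$ if and only if $(U:_RM)$ is a graded weakly $J_{gr}$-semiprime ideal of $R$.
   Context: Standing conventions: $\Gamma$ is a group, $R=\bigoplus_{g\in\Gamma}R_g$ is a commutative $\Gamma$-graded ring with identity, and $M=\bigoplus_{g\in\Gamma}M_g$ is a unitary $\Gamma$-graded $R$-module. $h(R)$, $h(M)$ are the homogeneous elements. A submodule $U$ is graded if $U=\bigoplus_g(U\cap M_g)$. $M$ is graded finitely generated if $M=Ra_1+\dots+Ra_n$ with $a_i\in h(M)$; graded multiplication if every graded submodule equals $KM$ for some graded ideal $K$ of $R$; faithful if $\mathrm{ann}_R(M)=0$. $(U:_RM)=\{r\in R: rM\subseteq U\}$. For a graded module $N$, a graded submodule $U\neq N$ is Gr-maximal if every graded submodule between $U$ and $N$ equals $U$ or $N$; $J_{gr}(N)$ is the intersection of all Gr-maximal submodules of $N$ ($=N$ if none); $J_{gr}(R)$ is this for $N=R$. A proper graded submodule $U$ of $M$ is graded weakly $J_{gr}$-semiprime if whenever $r_g\in h(R)$, $m_h\in h(M)$, $n\in\mathbb{Z}^+$ and $0\neq r_g^nm_h\in U$, then $r_gm_h\in U+J_{gr}(M)$; a graded ideal of $R$ is graded weakly $J_{gr}$-semiprime if it is so as a submodule of the graded $R$-module $R$. *)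

theory Defs
  imports Complex_Main
begin

text \<open>The group Gamma is a type of class group_add
  (written additively, not necessarily abelian). The ring R is the whole type 'r,
  the module M is the whole type 'm with scalar multiplication scale.\<close>

definition gr_decomp :: "('g \<Rightarrow> 'b::ab_group_add set) \<Rightarrow> bool" where
  "gr_decomp A \<longleftrightarrow>
     (\<forall>g. 0 \<in> A g \<and> (\<forall>x\<in>A g. \<forall>y\<in>A g. x - y \<in> A g)) \<and>
     (\<forall>x. \<exists>!c. finite {g. c g \<noteq> 0} \<and> (\<forall>g. c g \<in> A g) \<and> x = (\<Sum>g\<in>{g. c g \<noteq> 0}. c g))"

definition graded_ring :: "('g::group_add \<Rightarrow> 'r::comm_ring_1 set) \<Rightarrow> bool" where
  "graded_ring Rg \<longleftrightarrow> gr_decomp Rg \<and> (\<forall>g h. \<forall>a\<in>Rg g. \<forall>b\<in>Rg h. a * b \<in> Rg (g + h))"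

definition graded_module ::
  "('r::comm_ring_1 \<Rightarrow> 'm::ab_group_add \<Rightarrow> 'm) \<Rightarrow> ('g::group_add \<Rightarrow> 'r set) \<Rightarrow> ('g \<Rightarrow> 'm set) \<Rightarrow> bool" where
  "graded_module scale Rg Mg \<longleftrightarrow> module scale \<and> graded_ring Rg \<and> gr_decomp Mg \<and>
     (\<forall>g h. \<forall>r\<in>Rg g. \<forall>m\<in>Mg h. scale r m \<in> Mg (g + h))"

definition homog :: "('g \<Rightarrow> 'b set) \<Rightarrow> 'b set" where
  "homog A = (\<Union>g. A g)"

definition gr_submodule :: "('r::comm_ring_1 \<Rightarrow> 'm::ab_group_add \<Rightarrow> 'm) \<Rightarrow> ('g \<Rightarrow> 'm set) \<Rightarrow> 'm set \<Rightarrow> bool" where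
  "gr_submodule scale A U \<longleftrightarrow> module.subspace scale U \<and>
     (\<forall>x\<in>U. \<exists>c. finite {g. c g \<noteq> 0} \<and> (\<forall>g. c g \<in> U \<inter> A g) \<and> x = (\<Sum>g\<in>{g. c g \<noteq> 0}. c g))"

definition gr_maximal :: "('r::comm_ring_1 \<Rightarrow> 'm::ab_group_add \<Rightarrow> 'm) \<Rightarrow> ('g \<Rightarrow> 'm set) \<Rightarrow> 'm set \<Rightarrow> bool" where
  "gr_maximal scale A U \<longleftrightarrow> gr_submodule scale A U \<and> U \<noteq> UNIV \<and>
     (\<forall>V. gr_submodule scale A V \<and> U \<subseteq> V \<longrightarrow> V = U \<or> V = UNIV)"

text \<open>Graded Jacobson radical of the module (= UNIV if there is no Gr-maximal submodule).\<close>
definition J_gr :: "('r::comm_ring_1 \<Rightarrow> 'm::ab_group_add \<Rightarrow> 'm) \<Rightarrow> ('g \<Rightarrow> 'm set) \<Rightarrow> 'm set" where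
  "J_gr scale A = \<Inter>{U. gr_maximal scale A U}"

definition gr_fin_gen :: "('r::comm_ring_1 \<Rightarrow> 'm::ab_group_add \<Rightarrow> 'm) \<Rightarrow> ('g \<Rightarrow> 'm set) \<Rightarrow> bool" where
  "gr_fin_gen scale A \<longleftrightarrow> (\<exists>S. finite S \<and> S \<subseteq> homog A \<and> module.span scale S = UNIV)"

definition ideal_times :: "('r::comm_ring_1 \<Rightarrow> 'm::ab_group_add \<Rightarrow> 'm) \<Rightarrow> 'r set \<Rightarrow> 'm set" where
  "ideal_times scale K = module.span scale {scale k m | k m. k \<in> K}"

definition gr_multiplication ::
  "('r::comm_ring_1 \<Rightarrow> 'm::ab_group_add \<Rightarrow> 'm) \<Rightarrow> ('g \<Rightarrow> 'r set) \<Rightarrow> ('g \<Rightarrow> 'm set) \<Rightarrow> bool" where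
  "gr_multiplication scale Rg Mg \<longleftrightarrow>
     (\<forall>U. gr_submodule scale Mg U \<longrightarrow> (\<exists>K. gr_submodule (*) Rg K \<and> U = ideal_times scale K))"

definition faithful :: "('r::comm_ring_1 \<Rightarrow> 'm::ab_group_add \<Rightarrow> 'm) \<Rightarrow> bool" where
  "faithful scale \<longleftrightarrow> (\<forall>r. (\<forall>m. scale r m = 0) \<longrightarrow> r = 0)"

definition colon :: "('r::comm_ring_1 \<Rightarrow> 'm::ab_group_add \<Rightarrow> 'm) \<Rightarrow> 'm set \<Rightarrow> 'r set" where
  "colon scale U = {r. \<forall>m. scale r m \<in> U}"

definition gr_weakly_J_semiprime ::
  "('r::comm_ring_1 \<Rightarrow> 'm::ab_group_add \<Rightarrow> 'm) \<Rightarrow> ('g \<Rightarrow> 'r set) \<Rightarrow> ('g \<Rightarrow> 'm set) \<Rightarrow> 'm set \<Rightarrow> bool" where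
  "gr_weakly_J_semiprime scale Rg Mg U \<longleftrightarrow> gr_submodule scale Mg U \<and> U \<noteq> UNIV \<and>
     (\<forall>g h r m (n::nat). r \<in> Rg g \<longrightarrow> m \<in> Mg h \<longrightarrow> n > 0 \<longrightarrow>
        scale (r ^ n) m \<noteq> 0 \<longrightarrow> scale (r ^ n) m \<in> U \<longrightarrow>
        scale r m \<in> {u + j | u j. u \<in> U \<and> j \<in> J_gr scale Mg})"

end

theory Submission
  imports Defs
begin

(* The key fact is the cancellation law (B M : M) = B for every ideal B of R, valid in a finitely
   generated faithful graded multiplication module. If x M \<subseteq> B M but x \<notin> B, take a maximal ideal
   P \<supseteq> (B : x). Nakayama's lemma and faithfulness give a homogeneous generator m \<notin> P M; writing
   R m = K M and choosing k \<in> K - P yields u \<equiv> 1 (mod P) with u M \<subseteq> R m. Then u x m = b m for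
   some b \<in> B, faithfulness turns this into u\<^sup>2 x = u b, so u\<^sup>2 \<in> P and hence 1 \<in> P.

   For the equivalence, R m = (R m : M) M reduces the condition for r on a homogeneous m to the
   condition for r on the homogeneous k with k M \<subseteq> R m; conversely U = (U : M) M,
   J_gr(M) = J_gr(R) M and cancellation carry the condition from M back to R. Whenever r\<^sup>n kills
   the relevant element, the product in question is a homogeneous nilpotent and so lies in J_gr(R). *)

lemma power_mult_eq_0:
  fixes a b :: "'a::comm_ring_1"
  assumes "0 < n" and "a ^ n * b = 0"
  shows "(a * b) ^ n = 0"
proof -
  have "(a * b) ^ n = (a ^ n * b) * b ^ (n - 1)"
    using assms(1) by (cases n) (simp_all add: power_mult_distrib mult_ac)
  with assms(2) show ?thesis by simp
qed


subsection \<open>Homogeneous decompositions\<close>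

definition homog_decomp :: "('g \<Rightarrow> 'b::ab_group_add set) \<Rightarrow> ('g \<Rightarrow> 'b) \<Rightarrow> 'b \<Rightarrow> bool" where
  "homog_decomp A c x \<longleftrightarrow>
     finite {g. c g \<noteq> 0} \<and> (\<forall>g. c g \<in> A g) \<and> x = (\<Sum>g\<in>{g. c g \<noteq> 0}. c g)"

lemma gr_decomp_iff:
  "gr_decomp A \<longleftrightarrow> (\<forall>g. 0 \<in> A g \<and> (\<forall>x\<in>A g. \<forall>y\<in>A g. x - y \<in> A g)) \<and> (\<forall>x. \<exists>!c. homog_decomp A c x)"
  by (simp add: gr_decomp_def homog_decomp_def)

lemma gr_submodule_iff_decomp:
  "gr_submodule scale A U \<longleftrightarrow>
     module.subspace scale U \<and> (\<forall>x\<in>U. \<exists>c. homog_decomp (\<lambda>g. U \<inter> A g) c x)"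
  by (simp add: gr_submodule_def homog_decomp_def)

lemma gr_decomp_zero: "gr_decomp A \<Longrightarrow> 0 \<in> A g"
  by (simp add: gr_decomp_def)

lemma gr_decomp_add:
  assumes "gr_decomp A" and "x \<in> A g" and "y \<in> A g"
  shows "x + y \<in> A g"
proof -
  have "\<forall>a\<in>A g. \<forall>b\<in>A g. a - b \<in> A g" and "0 \<in> A g"
    using assms(1) by (simp_all add: gr_decomp_def)
  then have "x - (0 - y) \<in> A g" using assms(2,3) by blast
  then show ?thesis by simp
qed

lemma gr_decomp_ex: "gr_decomp A \<Longrightarrow> \<exists>c. homog_decomp A c x"
  unfolding gr_decomp_iff by blast

lemma gr_decomp_unique:
  "gr_decomp A \<Longrightarrow> homog_decomp A c x \<Longrightarrow> homog_decomp A d x \<Longrightarrow> c = d"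
  unfolding gr_decomp_iff by blast

lemma homog_decomp_zero: "(\<And>g. 0 \<in> A g) \<Longrightarrow> homog_decomp A (\<lambda>_. 0) 0"
  by (simp add: homog_decomp_def)

lemma homog_decomp_add:
  assumes closed: "\<And>g x y. x \<in> A g \<Longrightarrow> y \<in> A g \<Longrightarrow> x + y \<in> A g"
    and c: "homog_decomp A c x" and d: "homog_decomp A d y"
  shows "homog_decomp A (\<lambda>g. c g + d g) (x + y)"
proof -
  let ?C = "{g. c g \<noteq> 0}" and ?D = "{g. d g \<noteq> 0}" and ?E = "{g. c g + d g \<noteq> 0}"
  have fin: "finite (?C \<union> ?D)" using c d by (simp add: homog_decomp_def)
  have "x = (\<Sum>g\<in>?C \<union> ?D. c g)" and "y = (\<Sum>g\<in>?C \<union> ?D. d g)"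
    using c d fin by (auto simp: homog_decomp_def intro: sum.mono_neutral_left)
  then have "x + y = (\<Sum>g\<in>?C \<union> ?D. c g + d g)" by (simp add: sum.distrib)
  also have "\<dots> = (\<Sum>g\<in>?E. c g + d g)" by (rule sum.mono_neutral_right) (use fin in auto)
  finally have "x + y = (\<Sum>g\<in>?E. c g + d g)" .
  moreover have "finite ?E" using fin by (rule finite_subset[rotated]) auto
  moreover have "c g + d g \<in> A g" for g using c d closed by (simp add: homog_decomp_def)
  ultimately show ?thesis unfolding homog_decomp_def by blast
qed

lemma homog_decomp_mono:
  "homog_decomp A c x \<Longrightarrow> (\<And>g. A g \<subseteq> B g) \<Longrightarrow> homog_decomp B c x"
  by (auto simp: homog_decomp_def)


subsection \<open>Ideals and the submodules K M\<close>

lemma module_mult: "module ((*) :: 'a::comm_ring_1 \<Rightarrow> 'a \<Rightarrow> 'a)"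
  by unfold_locales (auto simp: algebra_simps)

interpretation Rm: module "(*) :: 'a::comm_ring_1 \<Rightarrow> 'a \<Rightarrow> 'a"
  by (rule module_mult)

(* Rm.scale_scale is left-associativity of *, which loops against mult.assoc. *)
declare Rm.scale_scale [simp del]

abbreviation ideal :: "'a::comm_ring_1 set \<Rightarrow> bool" where
  "ideal \<equiv> Rm.subspace"

definition maximal_ideal :: "'a::comm_ring_1 set \<Rightarrow> bool" where
  "maximal_ideal P \<longleftrightarrow> ideal P \<and> 1 \<notin> P \<and> (\<forall>Q. ideal Q \<and> P \<subseteq> Q \<and> 1 \<notin> Q \<longrightarrow> Q = P)"

lemma ideal_colon_elem:
  fixes x :: "'a::comm_ring_1"
  assumes "ideal B"
  shows "ideal {a. a * x \<in> B}"
  by (rule Rm.subspaceI)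
    (auto simp: distrib_right mult.assoc intro: Rm.subspace_0 Rm.subspace_add Rm.subspace_scale assms)

lemma ex_maximal_ideal:
  fixes C :: "'a::comm_ring_1 set"
  assumes "ideal C" and "1 \<notin> C"
  obtains P where "maximal_ideal P" and "C \<subseteq> P"
proof -
  define \<A> where "\<A> = {Q. ideal Q \<and> C \<subseteq> Q \<and> (1::'a) \<notin> Q}"
  have "\<exists>P\<in>\<A>. \<forall>Q\<in>\<A>. P \<subseteq> Q \<longrightarrow> Q = P"
  proof (rule subset_Zorn_nonempty)
    fix \<C> assume ne: "\<C> \<noteq> {}" and ch: "subset.chain \<A> \<C>"
    have ideals: "\<And>X. X \<in> \<C> \<Longrightarrow> ideal X" and cmp: "\<And>X Y. X \<in> \<C> \<Longrightarrow> Y \<in> \<C> \<Longrightarrow> X \<subseteq> Y \<or> Y \<subseteq> X"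
      using ch by (auto simp: subset_chain_def \<A>_def)
    have "ideal (\<Union>\<C>)"
    proof (rule Rm.subspaceI)
      show "0 \<in> \<Union>\<C>" using ne ideals Rm.subspace_0 by blast
      show "x + y \<in> \<Union>\<C>" if xy: "x \<in> \<Union>\<C>" "y \<in> \<Union>\<C>" for x y
      proof -
        obtain X Y where XY: "X \<in> \<C>" "Y \<in> \<C>" "x \<in> X" "y \<in> Y" using xy by blast
        then have XY_in: "X \<union> Y \<in> \<C>" using cmp[of X Y] by (metis Un_absorb1 Un_absorb2)
        show ?thesis using Rm.subspace_add[OF ideals[OF XY_in]] XY XY_in by blast
      qed
      show "c * x \<in> \<Union>\<C>" if "x \<in> \<Union>\<C>" for c x
        using that ideals Rm.subspace_scale by blast
    qed
    then show "\<Union>\<C> \<in> \<A>" using ne ch by (auto simp: \<A>_def subset_chain_def)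
  qed (use assms in \<open>auto simp: \<A>_def\<close>)
  then obtain P where "P \<in> \<A>" and max: "\<And>Q. Q \<in> \<A> \<Longrightarrow> P \<subseteq> Q \<Longrightarrow> Q = P" by blast
  then have P: "ideal P" "C \<subseteq> P" "1 \<notin> P" by (simp_all add: \<A>_def)
  have "maximal_ideal P" unfolding maximal_ideal_def
  proof (intro conjI allI impI P(1,3))
    fix Q assume "ideal Q \<and> P \<subseteq> Q \<and> 1 \<notin> Q"
    with P(2) show "Q = P" by (intro max) (auto simp: \<A>_def)
  qed
  then show ?thesis using P(2) by (rule that)
qed

lemma ex_inverse_mod_maximal_ideal:
  assumes P: "maximal_ideal P" and k: "k \<notin> P"
  obtains c where "1 - c * k \<in> P"
proof -
  let ?Q = "Rm.span (insert k P)"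
  have "P \<subseteq> ?Q" and "k \<in> ?Q" by (auto intro: Rm.span_base)
  then have "1 \<in> ?Q" using P k Rm.subspace_span unfolding maximal_ideal_def by blast
  then obtain c where "1 - c * k \<in> Rm.span P" by (auto simp: Rm.span_breakdown_eq)
  moreover have "Rm.span P = P" using P by (simp add: maximal_ideal_def)
  ultimately show ?thesis using that by simp
qed

context module
begin

lemma subspace_set_plus:
  assumes "subspace A" and "subspace B"
  shows "subspace {a + b | a b. a \<in> A \<and> b \<in> B}"
proof -
  have eq: "span A = A" "span B = B" using assms by simp_all
  have "{a + b | a b. a \<in> A \<and> b \<in> B} = span (A \<union> B)" by (simp only: span_Un eq)
  then show ?thesis by simp
qed

lemma subspace_scale_vimage: "subspace V \<Longrightarrow> subspace {m. scale a m \<in> V}"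
  by (rule module_hom.subspace_vimage[OF module_hom_scale_self, unfolded vimage_def])

lemma subspace_J_gr: "subspace (J_gr scale A)"
  unfolding J_gr_def by (rule subspace_Inter) (auto simp: gr_maximal_def gr_submodule_def)

lemma ideal_colon: "subspace U \<Longrightarrow> ideal (colon scale U)"
  unfolding colon_def
  by (rule Rm.subspaceI)
    (auto simp: scale_left_distrib subspace_0 subspace_add simp flip: scale_scale intro: subspace_scale)

lemma colon_neq_UNIV:
  assumes "U \<noteq> UNIV"
  shows "colon scale U \<noteq> UNIV"
proof
  assume "colon scale U = UNIV"
  then have "m \<in> U" for m unfolding colon_def by (metis (mono_tags) UNIV_I mem_Collect_eq scale_one)
  with assms show False by blast
qed

lemma scale_in_ideal_times: "k \<in> K \<Longrightarrow> scale k m \<in> ideal_times scale K"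
  unfolding ideal_times_def by (rule span_base) blast

lemma subspace_ideal_times: "subspace (ideal_times scale K)"
  by (simp add: ideal_times_def)

lemma ideal_times_mono: "K \<subseteq> L \<Longrightarrow> ideal_times scale K \<subseteq> ideal_times scale L"
  unfolding ideal_times_def by (rule span_mono) blast

lemma ideal_times_subset:
  "subspace V \<Longrightarrow> (\<And>k m. k \<in> K \<Longrightarrow> scale k m \<in> V) \<Longrightarrow> ideal_times scale K \<subseteq> V"
  unfolding ideal_times_def by (rule span_minimal) auto

lemma ideal_times_colon_subset: "subspace U \<Longrightarrow> ideal_times scale (colon scale U) \<subseteq> U"
  by (rule ideal_times_subset) (auto simp: colon_def)

lemma scale_mult_in_span_scale:
  assumes "range (scale u) \<subseteq> span {m}"
  shows "scale (a * u) m' \<in> span {scale a m}"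
proof -
  obtain \<gamma> where \<gamma>: "scale u m' = scale \<gamma> m" using assms by (auto simp: span_singleton)
  have "scale (a * u) m' = scale a (scale u m')" by simp
  also have "\<dots> = scale \<gamma> (scale a m)" using \<gamma> by (simp add: mult.commute)
  finally show ?thesis unfolding span_singleton by (rule range_eqI)
qed

lemma mult_eq_0_of_cyclic:
  assumes "faithful scale" and "range (scale u) \<subseteq> span {m}" and "scale a m = 0"
  shows "a * u = 0"
proof -
  have "scale (a * u) m' = 0" for m'
    using scale_mult_in_span_scale[OF assms(2), of a m'] assms(3) by (auto simp: span_singleton)
  with assms(1) show ?thesis by (simp add: faithful_def)
qed

lemma scale_ideal_times_cyclic:
  assumes B: "ideal B" and u: "range (scale u) \<subseteq> span {m}" and y: "y \<in> ideal_times scale B"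
  shows "\<exists>b\<in>B. scale u y = scale b m"
  using y unfolding ideal_times_def
proof (induct rule: span_induct_alt)
  case base
  show ?case using Rm.subspace_0[OF B] by force
next
  case (step c x y)
  obtain b where b: "b \<in> B" "scale u y = scale b m" using step(2) by blast
  obtain b' m' where x: "x = scale b' m'" "b' \<in> B" using step(1) by blast
  obtain \<gamma> where \<gamma>: "scale u m' = scale \<gamma> m" using u by (auto simp: span_singleton)
  have "scale u x = scale b' (scale u m')" using x(1) by (simp add: mult.commute)
  also have "\<dots> = scale (b' * \<gamma>) m" using \<gamma> by simp
  finally have ux: "scale u x = scale (b' * \<gamma>) m" .
  have "scale u (scale c x + y) = scale c (scale u x) + scale u y"
    by (simp only: scale_right_distrib scale_left_commute[of u c])
  also have "\<dots> = scale (c * (b' * \<gamma>) + b) m" using ux b(2) by (simp add: scale_left_distrib)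
  finally have "scale u (scale c x + y) = scale (c * (b' * \<gamma>) + b) m" .
  moreover have "c * (b' * \<gamma>) + b \<in> B"
    using B b x by (metis Rm.subspace_add Rm.subspace_scale mult.commute)
  ultimately show ?case by blast
qed

lemma ideal_times_finite_gen:
  assumes P: "ideal P" and S: "finite S" "span S = UNIV" and x: "x \<in> ideal_times scale P"
  shows "\<exists>q. (\<forall>t\<in>S. q t \<in> P) \<and> x = (\<Sum>t\<in>S. scale (q t) t)"
  using x unfolding ideal_times_def
proof (induct rule: span_induct_alt)
  case base
  show ?case using Rm.subspace_0[OF P] by (intro exI[of _ "\<lambda>_. 0"]) simp
next
  case (step c y z)
  obtain p m where y: "y = scale p m" "p \<in> P" using step(1) by blast
  obtain u where m: "m = (\<Sum>t\<in>S. scale (u t) t)" using S by (auto simp: span_finite)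
  obtain q where q: "\<forall>t\<in>S. q t \<in> P" "z = (\<Sum>t\<in>S. scale (q t) t)" using step(2) by blast
  have "scale c y + z = (\<Sum>t\<in>S. scale (u t * (c * p) + q t) t)"
    by (simp add: y m q scale_sum_right scale_left_distrib sum.distrib mult_ac)
  moreover have "\<forall>t\<in>S. u t * (c * p) + q t \<in> P"
    using P q y by (simp add: Rm.subspace_add Rm.subspace_scale)
  ultimately show ?case by (intro exI[of _ "\<lambda>t. u t * (c * p) + q t"] conjI)
qed

text \<open>The relations of e on b \<in> S give e' b as a combination of the other generators, for
  e' = e - Q b b; multiplying the relations of e by e' then eliminates b.\<close>
lemma relations_drop_generator:
  assumes P: "ideal P"
    and QP: "\<And>s t. s \<in> insert b S \<Longrightarrow> t \<in> insert b S \<Longrightarrow> Q s t \<in> P"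
    and Qe: "\<And>s. s \<in> insert b S \<Longrightarrow> scale e s = scale (Q s b) b + (\<Sum>t\<in>S. scale (Q s t) t)"
  shows "\<forall>s\<in>S. \<exists>q. (\<forall>t\<in>S. q t \<in> P) \<and> scale ((e - Q b b) * e) s = (\<Sum>t\<in>S. scale (q t) t)"
proof
  fix s assume s: "s \<in> S"
  define e' where "e' = e - Q b b"
  have "scale e' b = (\<Sum>t\<in>S. scale (Q b t) t)"
    using Qe[of b] by (simp add: e'_def scale_left_diff_distrib)
  from arg_cong[OF this, of "scale (Q s b)"]
  have eb: "scale (Q s b * e') b = (\<Sum>t\<in>S. scale (Q s b * Q b t) t)"
    by (simp add: scale_sum_right)
  have "scale (e' * e) s = scale e' (scale e s)" by simp
  also have "\<dots> = scale (Q s b * e') b + (\<Sum>t\<in>S. scale (e' * Q s t) t)"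
    using Qe[of s] s by (simp add: scale_right_distrib scale_sum_right mult.commute)
  also have "\<dots> = (\<Sum>t\<in>S. scale (e' * Q s t + Q s b * Q b t) t)"
    using eb by (simp add: scale_left_distrib sum.distrib add.commute)
  finally show "\<exists>q. (\<forall>t\<in>S. q t \<in> P) \<and> scale ((e - Q b b) * e) s = (\<Sum>t\<in>S. scale (q t) t)"
    using QP s unfolding e'_def[symmetric] by (intro exI[of _ "\<lambda>t. e' * Q s t + Q s b * Q b t"])
      (auto intro!: Rm.subspace_add[OF P] Rm.subspace_scale[OF P])
qed

lemma ex_annihilator_of_relations:
  assumes P: "ideal P" and S: "finite S"
  shows "1 - e \<in> P \<Longrightarrow> \<forall>s\<in>S. \<exists>q. (\<forall>t\<in>S. q t \<in> P) \<and> scale e s = (\<Sum>t\<in>S. scale (q t) t)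
    \<Longrightarrow> \<exists>a. 1 - a \<in> P \<and> (\<forall>s\<in>S. scale a s = 0)"
  using S
proof (induction S arbitrary: e rule: finite_induct)
  case empty
  show ?case using Rm.subspace_0[OF P] by (intro exI[of _ 1]) simp
next
  case (insert b S)
  obtain Q where QP: "\<And>s t. s \<in> insert b S \<Longrightarrow> t \<in> insert b S \<Longrightarrow> Q s t \<in> P"
    and Qe: "\<And>s. s \<in> insert b S \<Longrightarrow> scale e s = scale (Q s b) b + (\<Sum>t\<in>S. scale (Q s t) t)"
    using bchoice[OF insert.prems(2)] insert.hyps by auto
  define e' where "e' = e - Q b b"
  have eb: "scale e' b = (\<Sum>t\<in>S. scale (Q b t) t)"
    using Qe[of b] by (simp add: e'_def scale_left_diff_distrib)
  have e': "1 - e' \<in> P"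
    using Rm.subspace_add[OF P insert.prems(1) QP[of b b]] by (simp add: e'_def algebra_simps)
  have "1 - e' * e \<in> P"
    using Rm.subspace_add[OF P e' Rm.subspace_scale[OF P insert.prems(1), of e']]
    by (simp add: algebra_simps)
  moreover have "\<forall>s\<in>S. \<exists>q. (\<forall>t\<in>S. q t \<in> P) \<and> scale (e' * e) s = (\<Sum>t\<in>S. scale (q t) t)"
    unfolding e'_def by (rule relations_drop_generator[OF P QP Qe])
  ultimately obtain a where a: "1 - a \<in> P" "\<forall>s\<in>S. scale a s = 0"
    using insert.IH by blast
  have "1 - a * e' \<in> P"
    using Rm.subspace_add[OF P a(1) Rm.subspace_scale[OF P e', of a]] by (simp add: algebra_simps)
  moreover have "scale (a * e') s = 0" if "s \<in> insert b S" for s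
  proof -
    have "scale (a * c) t = 0" if "t \<in> S" for c t
      using a(2) that by (metis mult.commute scale_scale scale_zero_right)
    moreover have "scale (a * e') b = (\<Sum>t\<in>S. scale (a * Q b t) t)"
      using arg_cong[OF eb, of "scale a"] by (simp add: scale_sum_right)
    ultimately show ?thesis using that by auto
  qed
  ultimately show ?case by blast
qed

lemma nakayama:
  assumes P: "ideal P" and S: "finite S" "span S = UNIV" and PM: "ideal_times scale P = UNIV"
  obtains a where "1 - a \<in> P" and "\<And>m. scale a m = 0"
proof -
  obtain a where a: "1 - a \<in> P" "\<forall>s\<in>S. scale a s = 0"
    using ex_annihilator_of_relations[OF P S(1), of 1] ideal_times_finite_gen[OF P S] PM Rm.subspace_0[OF P]
    by auto
  have "span S \<subseteq> {m. scale a m \<in> {0}}"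
    using a(2) by (intro span_minimal subspace_scale_vimage) auto
  then have "scale a m = 0" for m using S(2) by auto
  with a(1) show ?thesis by (rule that)
qed

lemma ideal_times_neq_UNIV:
  assumes "faithful scale" "finite S" "span S = UNIV" "ideal P" "1 \<notin> P"
  shows "ideal_times scale P \<noteq> UNIV"
proof
  assume "ideal_times scale P = UNIV"
  then obtain a where a: "1 - a \<in> P" "\<And>m. scale a m = 0" using nakayama assms(2-4) by blast
  then have "a = 0" using assms(1) by (simp add: faithful_def)
  with a(1) assms(5) show False by simp
qed

end


subsection \<open>Graded modules\<close>

locale gr_module =
  fixes scale :: "'r::comm_ring_1 \<Rightarrow> 'm::ab_group_add \<Rightarrow> 'm"
    and Rg :: "'g::group_add \<Rightarrow> 'r set"
    and Mg :: "'g \<Rightarrow> 'm set"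
  assumes graded_module: "graded_module scale Rg Mg"

sublocale gr_module \<subseteq> module scale
  using graded_module by (simp add: graded_module_def)

context gr_module
begin

lemma gr_decomp_R: "gr_decomp Rg"
  using graded_module by (simp add: graded_module_def graded_ring_def)

lemma gr_decomp_M: "gr_decomp Mg"
  using graded_module by (simp add: graded_module_def)

lemma mult_homog: "a \<in> Rg g \<Longrightarrow> b \<in> Rg h \<Longrightarrow> a * b \<in> Rg (g + h)"
  using graded_module by (simp add: graded_module_def graded_ring_def)

lemma scale_homog: "r \<in> Rg g \<Longrightarrow> m \<in> Mg h \<Longrightarrow> scale r m \<in> Mg (g + h)"
  using graded_module by (simp add: graded_module_def)

lemma gr_module_ring: "gr_module (*) Rg Rg"
proof -
  have "graded_ring Rg" using graded_module by (simp add: graded_module_def)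
  then show ?thesis using module_mult by (simp add: gr_module_def graded_module_def graded_ring_def)
qed

lemma subspace_eq_UNIV_of_homog:
  assumes "subspace V" and "homog Mg \<subseteq> V"
  shows "V = UNIV"
proof -
  have "m \<in> V" for m
  proof -
    obtain c where c: "homog_decomp Mg c m" using gr_decomp_ex[OF gr_decomp_M] by blast
    then have "c g \<in> V" for g using assms(2) by (auto simp: homog_decomp_def homog_def)
    with c show ?thesis using assms(1) by (simp add: homog_decomp_def subspace_sum)
  qed
  then show ?thesis by blast
qed

lemma homog_decomp_scale:
  assumes r: "homog_decomp Rg c r" and a: "a \<in> Mg h"
  shows "homog_decomp Mg (\<lambda>k. scale (c (k - h)) a) (scale r a)"
proof -
  define e where "e = (\<lambda>k. scale (c (k - h)) a)"
  let ?C = "{g. c g \<noteq> 0}"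
  have fin: "finite ?C" and rsum: "r = (\<Sum>g\<in>?C. c g)" using r by (simp_all add: homog_decomp_def)
  have supp: "{k. e k \<noteq> 0} \<subseteq> (\<lambda>g. g + h) ` ?C"
  proof
    fix k assume "k \<in> {k. e k \<noteq> 0}"
    then have "k - h \<in> ?C" by (auto simp: e_def)
    then show "k \<in> (\<lambda>g. g + h) ` ?C" by (rule rev_image_eqI) simp
  qed
  have "scale r a = (\<Sum>g\<in>?C. e (g + h))" by (simp add: rsum scale_sum_left e_def)
  also have "\<dots> = (\<Sum>k\<in>(\<lambda>g. g + h) ` ?C. e k)" by (simp add: sum.reindex inj_on_def)
  also have "\<dots> = (\<Sum>k\<in>{k. e k \<noteq> 0}. e k)" by (rule sum.mono_neutral_right) (use fin supp in auto)
  finally have "scale r a = (\<Sum>k\<in>{k. e k \<noteq> 0}. e k)" .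
  moreover have "e k \<in> Mg k" for k
    using scale_homog[of "c (k - h)" "k - h" a h] r a by (simp add: e_def homog_decomp_def)
  ultimately show ?thesis
    using finite_subset[OF supp finite_imageI[OF fin]] unfolding e_def[symmetric] homog_decomp_def by blast
qed

lemma gr_submodule_component:
  assumes U: "gr_submodule scale Mg U" and x: "x \<in> U" and e: "homog_decomp Mg e x"
  shows "e g \<in> U"
proof -
  obtain c where c: "homog_decomp (\<lambda>g. U \<inter> Mg g) c x"
    using U x unfolding gr_submodule_iff_decomp by blast
  have "homog_decomp Mg c x" using c by (rule homog_decomp_mono) blast
  with e have "e = c" by (rule gr_decomp_unique[OF gr_decomp_M])
  with c show ?thesis by (simp add: homog_decomp_def)
qed

lemma gr_submodule_iff_span_homog:
  "gr_submodule scale Mg U \<longleftrightarrow> subspace U \<and> U \<subseteq> span (U \<inter> homog Mg)"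
proof
  assume U: "gr_submodule scale Mg U"
  have "x \<in> span (U \<inter> homog Mg)" if x: "x \<in> U" for x
  proof -
    obtain c where c: "homog_decomp (\<lambda>g. U \<inter> Mg g) c x"
      using U x unfolding gr_submodule_iff_decomp by blast
    then have "c g \<in> span (U \<inter> homog Mg)" for g
      by (auto simp: homog_decomp_def homog_def intro: span_base)
    with c show ?thesis by (simp add: homog_decomp_def span_sum)
  qed
  with U show "subspace U \<and> U \<subseteq> span (U \<inter> homog Mg)" by (auto simp: gr_submodule_def)
next
  assume U: "subspace U \<and> U \<subseteq> span (U \<inter> homog Mg)"
  have closed: "x + y \<in> U \<inter> Mg g" if "x \<in> U \<inter> Mg g" "y \<in> U \<inter> Mg g" for x y g
    using that U gr_decomp_add[OF gr_decomp_M] subspace_add by blast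
  have "\<exists>c. homog_decomp (\<lambda>g. U \<inter> Mg g) c x" if "x \<in> span (U \<inter> homog Mg)" for x
    using that
  proof (induct rule: span_induct_alt)
    case base
    show ?case using U gr_decomp_zero[OF gr_decomp_M] subspace_0 by (blast intro: homog_decomp_zero)
  next
    case (step r a y)
    obtain h where a: "a \<in> U" "a \<in> Mg h" using step(1) by (auto simp: homog_def)
    obtain c where "homog_decomp Rg c r" using gr_decomp_ex[OF gr_decomp_R] by blast
    from homog_decomp_scale[OF this a(2)]
    have ra: "homog_decomp (\<lambda>g. U \<inter> Mg g) (\<lambda>k. scale (c (k - h)) a) (scale r a)"
      using U a(1) by (auto simp: homog_decomp_def subspace_scale)
    obtain d where "homog_decomp (\<lambda>g. U \<inter> Mg g) d y" using step(2) by blast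
    with ra have "homog_decomp (\<lambda>g. U \<inter> Mg g) (\<lambda>k. scale (c (k - h)) a + d k) (scale r a + y)"
      by (rule homog_decomp_add[rotated]) (rule closed)
    then show ?case by blast
  qed
  with U show "gr_submodule scale Mg U" by (auto simp: gr_submodule_iff_decomp)
qed

lemma gr_submodule_span:
  assumes "S \<subseteq> homog Mg"
  shows "gr_submodule scale Mg (span S)"
proof -
  have "S \<subseteq> span S \<inter> homog Mg" using assms span_superset by blast
  then show ?thesis unfolding gr_submodule_iff_span_homog by (simp add: span_mono)
qed

lemma colon_memI_homog:
  assumes "subspace W" and "\<And>m h. m \<in> Mg h \<Longrightarrow> scale a m \<in> W"
  shows "a \<in> colon scale W"
proof -
  have "{m. scale a m \<in> W} = UNIV"
    using assms by (intro subspace_eq_UNIV_of_homog subspace_scale_vimage) (auto simp: homog_def)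
  then show ?thesis by (auto simp: colon_def)
qed

lemma gr_submodule_colon:
  assumes U: "gr_submodule scale Mg U"
  shows "gr_submodule (*) Rg (colon scale U)"
proof -
  interpret R: gr_module "(*)" Rg Rg by (rule gr_module_ring)
  have Us: "subspace U" using U by (simp add: gr_submodule_def)
  have "r \<in> Rm.span (colon scale U \<inter> homog Rg)" if r: "r \<in> colon scale U" for r
  proof -
    obtain c where c: "homog_decomp Rg c r" using gr_decomp_ex[OF gr_decomp_R] by blast
    have "c g \<in> colon scale U" for g
    proof (rule colon_memI_homog[OF Us])
      fix m h assume "m \<in> Mg h"
      then show "scale (c g) m \<in> U"
        using gr_submodule_component[OF U _ homog_decomp_scale[OF c], of m h "g + h"] r
        by (simp add: colon_def)
    qed
    with c have "c g \<in> Rm.span (colon scale U \<inter> homog Rg)" for g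
      by (auto simp: homog_decomp_def homog_def intro: Rm.span_base)
    with c show ?thesis by (simp add: homog_decomp_def Rm.span_sum)
  qed
  with ideal_colon[OF Us] show ?thesis unfolding R.gr_submodule_iff_span_homog by blast
qed

lemma ideal_times_subset_homog:
  assumes K: "gr_submodule (*) Rg K" and V: "subspace V"
    and hom: "\<And>k g m. k \<in> K \<Longrightarrow> k \<in> Rg g \<Longrightarrow> scale k m \<in> V"
  shows "ideal_times scale K \<subseteq> V"
proof (rule ideal_times_subset[OF V])
  interpret R: gr_module "(*)" Rg Rg by (rule gr_module_ring)
  fix k m assume "k \<in> K"
  then have "k \<in> Rm.span (K \<inter> homog Rg)" using K by (auto simp: R.gr_submodule_iff_span_homog)
  moreover have "Rm.span (K \<inter> homog Rg) \<subseteq> {k. scale k m \<in> V}"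
    using hom by (intro Rm.span_minimal module_hom.subspace_vimage[OF module_hom_scale_left V,
          unfolded vimage_def]) (auto simp: homog_def)
  ultimately show "scale k m \<in> V" by blast
qed

lemma ideal_times_colon_eq:
  assumes "gr_multiplication scale Rg Mg" and U: "gr_submodule scale Mg U"
  shows "ideal_times scale (colon scale U) = U"
proof
  obtain K where K: "U = ideal_times scale K" using assms by (auto simp: gr_multiplication_def)
  then have "K \<subseteq> colon scale U" by (auto simp: colon_def scale_in_ideal_times)
  then show "U \<subseteq> ideal_times scale (colon scale U)" using K ideal_times_mono by blast
  show "ideal_times scale (colon scale U) \<subseteq> U"
    using U by (intro ideal_times_colon_subset) (simp add: gr_submodule_def)
qed

text \<open>Since R m = (R m : M) M with (R m : M) graded, m lies in the span of the k m' for
  homogeneous k with k M \<subseteq> R m.\<close>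
lemma scale_mem_of_cyclic:
  assumes mu: "gr_multiplication scale Rg Mg" and m: "m \<in> Mg h" and W: "subspace W"
    and hom: "\<And>k g m'. k \<in> Rg g \<Longrightarrow> range (scale k) \<subseteq> span {m} \<Longrightarrow> scale (a * k) m' \<in> W"
  shows "scale a m \<in> W"
proof -
  let ?K = "colon scale (span {m})"
  have "gr_submodule scale Mg (span {m})" using m by (intro gr_submodule_span) (auto simp: homog_def)
  then have "m \<in> ideal_times scale ?K" and "gr_submodule (*) Rg ?K"
    using ideal_times_colon_eq[OF mu] gr_submodule_colon span_base by auto
  moreover have "ideal_times scale ?K \<subseteq> {y. scale a y \<in> W}"
    using hom by (intro ideal_times_subset_homog subspace_scale_vimage W calculation(2))
      (auto simp: colon_def)
  ultimately show ?thesis by blast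
qed

lemma nilpotent_in_J_gr:
  assumes x: "x \<in> Rg g" and nil: "x ^ n = 0"
  shows "x \<in> J_gr (*) Rg"
  unfolding J_gr_def
proof (rule InterI, rule ccontr)
  interpret R: gr_module "(*)" Rg Rg by (rule gr_module_ring)
  fix P assume "P \<in> {U. gr_maximal (*) Rg U}" and xP: "x \<notin> P"
  then have P: "gr_submodule (*) Rg P" "P \<noteq> UNIV"
    and max: "\<And>V. gr_submodule (*) Rg V \<Longrightarrow> P \<subseteq> V \<Longrightarrow> V = P \<or> V = UNIV"
    by (auto simp: gr_maximal_def)
  have Ps: "ideal P" using P by (simp add: gr_submodule_def)
  let ?V = "Rm.span (insert x (P \<inter> homog Rg))"
  have "P \<subseteq> ?V" using P(1) Rm.span_mono[of "P \<inter> homog Rg"] by (auto simp: R.gr_submodule_iff_span_homog)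
  moreover have "x \<in> ?V" by (simp add: Rm.span_base)
  moreover have "gr_submodule (*) Rg ?V" using x by (intro R.gr_submodule_span) (auto simp: homog_def)
  ultimately have "1 \<in> ?V" using max xP by blast
  then obtain k where "1 - k * x \<in> Rm.span (P \<inter> homog Rg)" by (auto simp: Rm.span_breakdown_eq)
  then have unit: "1 - k * x \<in> P" using Rm.span_minimal[of "P \<inter> homog Rg" P] Ps by blast
  have "1 = (\<Sum>i<n. (k * x) ^ i) * (1 - k * x)"
    using one_diff_power_eq[of "k * x" n] nil by (simp add: power_mult_distrib mult.commute)
  then have "1 \<in> P" using Rm.subspace_scale[OF Ps unit] by metis
  then have "c \<in> P" for c using Rm.subspace_scale[OF Ps, of 1 c] by simp
  with P(2) show False by blast
qed

lemma mult_in_J_gr: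
  assumes "r \<in> Rg g" and "x \<in> Rg h" and "0 < n" and "r ^ n * x = 0"
  shows "r * x \<in> J_gr (*) Rg"
  using nilpotent_in_J_gr[OF mult_homog[OF assms(1,2)]] power_mult_eq_0[OF assms(3,4)] by blast

lemma ex_homog_notin_ideal_times:
  assumes "gr_fin_gen scale Mg" and "faithful scale" and "ideal P" and "1 \<notin> P"
  obtains m h where "m \<in> Mg h" and "m \<notin> ideal_times scale P"
proof -
  obtain S where S: "finite S" "S \<subseteq> homog Mg" "span S = UNIV"
    using assms(1) by (auto simp: gr_fin_gen_def)
  have "ideal_times scale P \<noteq> UNIV" using S assms(2-4) by (intro ideal_times_neq_UNIV)
  then obtain m where "m \<in> S" "m \<notin> ideal_times scale P"
    using S(3) span_minimal[OF _ subspace_ideal_times, of S P] by blast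
  with S(2) show ?thesis using that by (auto simp: homog_def)
qed

lemma ex_cyclic_multiplier:
  assumes mu: "gr_multiplication scale Rg Mg" and P: "maximal_ideal P"
    and m: "m \<in> Mg h" "m \<notin> ideal_times scale P"
  obtains u where "1 - u \<in> P" and "range (scale u) \<subseteq> span {m}"
proof -
  let ?K = "colon scale (span {m})"
  have "gr_submodule scale Mg (span {m})" using m by (intro gr_submodule_span) (auto simp: homog_def)
  then have Km: "ideal_times scale ?K = span {m}" by (rule ideal_times_colon_eq[OF mu])
  have "\<not> ?K \<subseteq> P"
    using Km ideal_times_mono[of ?K P] m(2) span_base[of m "{m}"] by blast
  then obtain k where k: "k \<in> ?K" "k \<notin> P" by blast
  then obtain c where "1 - c * k \<in> P" using ex_inverse_mod_maximal_ideal P by blast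
  moreover have "c * k \<in> ?K" using Rm.subspace_scale[OF ideal_colon k(1)] by simp
  ultimately show ?thesis using that by (auto simp: colon_def)
qed

theorem colon_ideal_times:
  assumes fg: "gr_fin_gen scale Mg" and fa: "faithful scale" and mu: "gr_multiplication scale Rg Mg"
    and B: "ideal B"
  shows "colon scale (ideal_times scale B) = B"
proof (intro equalityI subsetI)
  fix x assume "x \<in> B"
  then show "x \<in> colon scale (ideal_times scale B)" by (simp add: colon_def scale_in_ideal_times)
next
  fix x assume x: "x \<in> colon scale (ideal_times scale B)"
  show "x \<in> B"
  proof (rule ccontr)
    assume "x \<notin> B"
    then obtain P where P: "maximal_ideal P" and xP: "{a. a * x \<in> B} \<subseteq> P"
      using ex_maximal_ideal[OF ideal_colon_elem[OF B]] by auto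
    have "ideal P" "1 \<notin> P" using P by (simp_all add: maximal_ideal_def)
    then obtain m h where m: "m \<in> Mg h" "m \<notin> ideal_times scale P"
      using ex_homog_notin_ideal_times[OF fg fa] by blast
    then obtain u where u: "1 - u \<in> P" "range (scale u) \<subseteq> span {m}"
      using ex_cyclic_multiplier[OF mu P] by blast
    have "scale x m \<in> ideal_times scale B" using x by (simp add: colon_def)
    then obtain b where b: "b \<in> B" "scale u (scale x m) = scale b m"
      using scale_ideal_times_cyclic[OF B u(2)] by blast
    then have "scale (u * x - b) m = 0" by (simp add: scale_left_diff_distrib)
    then have "(u * x - b) * u = 0" by (rule mult_eq_0_of_cyclic[OF fa u(2)])
    then have "(u * u) * x = u * b" by (simp add: algebra_simps)
    then have "u * u \<in> P" using xP Rm.subspace_scale[OF B b(1), of u] by auto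
    moreover have "1 = u * u + (1 + u) * (1 - u)" by (simp add: algebra_simps)
    ultimately have "1 \<in> P"
      using P u(1) by (metis Rm.subspace_add Rm.subspace_scale maximal_ideal_def)
    with P show False by (simp add: maximal_ideal_def)
  qed
qed

lemma mult_mem_colon_ideal_times:
  assumes fa: "faithful scale" and mu: "gr_multiplication scale Rg Mg"
    and J: "J_gr scale Mg \<subseteq> ideal_times scale (J_gr (*) Rg)"
    and U: "gr_weakly_J_semiprime scale Rg Mg U"
    and IB: "colon scale U \<subseteq> B" and JB: "J_gr (*) Rg \<subseteq> B"
    and r: "r \<in> Rg g" and s: "s \<in> Rg h" and n: "0 < n" and rs: "r ^ n * s \<in> colon scale U"
  shows "r * s \<in> colon scale (ideal_times scale B)"
proof (rule colon_memI_homog[OF subspace_ideal_times])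
  fix m h' assume m: "m \<in> Mg h'"
  have "gr_submodule scale Mg U" using U by (simp add: gr_weakly_J_semiprime_def)
  then have "U \<subseteq> ideal_times scale B" and "J_gr scale Mg \<subseteq> ideal_times scale B"
    using ideal_times_colon_eq[OF mu] ideal_times_mono[OF IB] ideal_times_mono[OF JB] J by auto
  then have UJ: "{u + j | u j. u \<in> U \<and> j \<in> J_gr scale Mg} \<subseteq> ideal_times scale B"
    using subspace_add[OF subspace_ideal_times] by blast
  show "scale (r * s) m \<in> ideal_times scale B"
  proof (cases "scale (r ^ n) (scale s m) = 0")
    case False
    moreover have "scale (r ^ n) (scale s m) \<in> U" using rs by (simp add: colon_def)
    ultimately have "scale r (scale s m) \<in> {u + j | u j. u \<in> U \<and> j \<in> J_gr scale Mg}"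
      using U r n scale_homog[OF s m] unfolding gr_weakly_J_semiprime_def by blast
    then show ?thesis using UJ by auto
  next
    case True
    show ?thesis
    proof (rule scale_mem_of_cyclic[OF mu m subspace_ideal_times])
      fix k g' m' assume k: "k \<in> Rg g'" "range (scale k) \<subseteq> span {m}"
      have "r ^ n * (s * k) = 0"
        using mult_eq_0_of_cyclic[OF fa k(2), of "r ^ n * s"] True by (simp add: mult.assoc)
      then have "r * (s * k) \<in> B" using mult_in_J_gr[OF r mult_homog[OF s k(1)] n] JB by blast
      then show "scale (r * s * k) m' \<in> ideal_times scale B"
        by (simp add: scale_in_ideal_times mult.assoc)
    qed
  qed
qed

lemma gr_weakly_J_semiprime_colon:
  assumes fg: "gr_fin_gen scale Mg" and fa: "faithful scale" and mu: "gr_multiplication scale Rg Mg"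
    and J: "J_gr scale Mg \<subseteq> ideal_times scale (J_gr (*) Rg)"
    and U: "gr_weakly_J_semiprime scale Rg Mg U"
  shows "gr_weakly_J_semiprime (*) Rg Rg (colon scale U)"
proof -
  let ?I = "colon scale U" and ?JR = "J_gr (*) Rg"
  define B where "B = {i + j | i j. i \<in> ?I \<and> j \<in> ?JR}"
  have Ugr: "gr_submodule scale Mg U" and UU: "U \<noteq> UNIV"
    using U by (simp_all add: gr_weakly_J_semiprime_def)
  have Us: "subspace U" using Ugr by (simp add: gr_submodule_def)
  have B: "ideal B" unfolding B_def by (intro Rm.subspace_set_plus ideal_colon Us Rm.subspace_J_gr)
  have "0 \<in> ?I" "0 \<in> ?JR" using Rm.subspace_0 ideal_colon[OF Us] Rm.subspace_J_gr by blast+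
  then have IB: "?I \<subseteq> B" and JB: "?JR \<subseteq> B" unfolding B_def by force+
  have "r * s \<in> B" if "r \<in> Rg g" "s \<in> Rg h" "0 < n" "r ^ n * s \<in> ?I" for g h r s and n :: nat
    using mult_mem_colon_ideal_times[OF fa mu J U IB JB that] colon_ideal_times[OF fg fa mu B] by simp
  then show ?thesis
    using gr_submodule_colon[OF Ugr] colon_neq_UNIV[OF UU]
    unfolding gr_weakly_J_semiprime_def B_def by blast
qed

lemma gr_weakly_J_semiprime_of_colon:
  assumes mu: "gr_multiplication scale Rg Mg" and U: "gr_submodule scale Mg U" "U \<noteq> UNIV"
    and J: "ideal_times scale (J_gr (*) Rg) \<subseteq> J_gr scale Mg"
    and I: "gr_weakly_J_semiprime (*) Rg Rg (colon scale U)"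
  shows "gr_weakly_J_semiprime scale Rg Mg U"
proof -
  define W where "W = {u + j | u j. u \<in> U \<and> j \<in> J_gr scale Mg}"
  have Us: "subspace U" using U by (simp add: gr_submodule_def)
  have W: "subspace W" unfolding W_def by (intro subspace_set_plus Us subspace_J_gr)
  have "scale r m \<in> W" if r: "r \<in> Rg g" and m: "m \<in> Mg h" and n: "0 < n"
    and rm: "scale (r ^ n) m \<in> U" for g h r m and n :: nat
  proof (rule scale_mem_of_cyclic[OF mu m W])
    fix k g' m' assume k: "k \<in> Rg g'" "range (scale k) \<subseteq> span {m}"
    show "scale (r * k) m' \<in> W"
    proof (cases "r ^ n * k = 0")
      case True
      then have "scale (r * k) m' \<in> J_gr scale Mg"
        using mult_in_J_gr[OF r k(1) n] J scale_in_ideal_times by blast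
      then show ?thesis unfolding W_def using subspace_0[OF Us] by force
    next
      case False
      have "span {scale (r ^ n) m} \<subseteq> U" by (rule span_minimal) (use rm Us in auto)
      then have "r ^ n * k \<in> colon scale U"
        using scale_mult_in_span_scale[OF k(2)] by (auto simp: colon_def)
      then obtain i j where "r * k = i + j" "i \<in> colon scale U" "j \<in> J_gr (*) Rg"
        using I r k(1) n False unfolding gr_weakly_J_semiprime_def by blast
      then have "scale (r * k) m' = scale i m' + scale j m'" "scale i m' \<in> U"
        "scale j m' \<in> J_gr scale Mg"
        using J scale_in_ideal_times by (auto simp: colon_def scale_left_distrib)
      then show ?thesis unfolding W_def by blast
    qed
  qed
  then show ?thesis using U unfolding gr_weakly_J_semiprime_def W_def by blast
qed

end

theorem theorem2p20:
  fixes scale :: "'r::comm_ring_1 \<Rightarrow> 'm::ab_group_add \<Rightarrow> 'm"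
    and Rg :: "'g::group_add \<Rightarrow> 'r set"
    and Mg :: "'g \<Rightarrow> 'm set"
    and U :: "'m set"
  assumes "graded_module scale Rg Mg"
    and "gr_fin_gen scale Mg"
    and "faithful scale"
    and "gr_multiplication scale Rg Mg"
    and "gr_submodule scale Mg U" and "U \<noteq> UNIV"
    and "J_gr scale Mg = ideal_times scale (J_gr (*) Rg)"
  shows "gr_weakly_J_semiprime scale Rg Mg U \<longleftrightarrow>
         gr_weakly_J_semiprime (*) Rg Rg (colon scale U)"
proof -
  interpret gr_module scale Rg Mg by (rule gr_module.intro) fact
  show ?thesis
    using gr_weakly_J_semiprime_colon[OF assms(2-4)] gr_weakly_J_semiprime_of_colon[OF assms(4-6)]
      assms(7) by blast
qed

end
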